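(* $\mathrm{GSym}=\mathrm{LWCQSym}$.
   Context: $\mathbb P$ and $\mathbb N$ denote positive and nonnegative integers. Let $X=\{x_i:i\in\mathbb P\}$ be commuting indeterminates. A left weak composition is a finite sequence $\alpha=(\alpha_1,\dots,\alpha_k)$ of nonnegative integers that is empty or has $\alpha_k>0$. For such $\alpha$, the left weak monomial quasisymmetric function is $M_\alpha=\sum_{0<i_1<\cdots<i_k}x_{i_1}^{\alpha_1}\cdots x_{i_k}^{\alpha_k}$, with $M_\emptyset=1$. $\mathrm{LWCQSym}$ is the $\mathbb Q$-span of all these $M_\alpha$ in $\mathbb Q[[X]]$. For a left weak composition $\alpha$ of length $k$ and $\beta\in\mathbb N^k$, $$\widehat M_{\binom{\alpha}{\beta}}=\sum_{0<i_1<\cdots<i_k}i_1^{\beta_1}\cdots i_k^{\beta_k}x_{i_1}^{\alpha_1}\cdots x_{i_k}^{\alpha_k}.$$ $\mathrm{GSym}$ is the $\mathbb Q$-span of all such $\widehat M_{\binom{\alpha}{\beta}}$. *)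

theory Defs
  imports Complex_Main
begin

text \<open>Formal power series in the commuting indeterminates x_1, x_2, ... over Q are
represented by their coefficient functions: a monomial is an exponent function
nat => nat (exponent of x_i at i; only finitely supported ones with support in the
positive integers arise), and a series is a map from monomials to rationals.\<close>

type_synonym monomial = "nat \<Rightarrow> nat"
type_synonym series = "monomial \<Rightarrow> rat"

definition left_weak_comp :: "nat list \<Rightarrow> bool" where
  "left_weak_comp \<alpha> \<longleftrightarrow> \<alpha> = [] \<or> last \<alpha> > 0"

definition mono_of :: "nat list \<Rightarrow> nat list \<Rightarrow> monomial" where
  "mono_of is \<alpha> = (\<lambda>n. \<Sum>j<length is. if is ! j = n then \<alpha> ! j else 0)"

definition index_tuples :: "nat \<Rightarrow> nat list set" where
  "index_tuples k = {is. length is = k \<and> sorted_wrt (<) is \<and> (\<forall>i\<in>set is. 0 < i)}"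

text \<open>Coefficients of hat M_(alpha over beta): the sum over tuples of
i_1^{b_1} ... i_k^{b_k} x_{i_1}^{a_1} ... x_{i_k}^{a_k}.\<close>
definition Mhat :: "nat list \<Rightarrow> nat list \<Rightarrow> series" where
  "Mhat \<alpha> \<beta> = (\<lambda>m. \<Sum>is\<in>{is\<in>index_tuples (length \<alpha>). mono_of is \<alpha> = m}.
                      \<Prod>j<length \<alpha>. (of_nat (is ! j) :: rat) ^ (\<beta> ! j))"

definition M :: "nat list \<Rightarrow> series" where
  "M \<alpha> = (\<lambda>m. of_nat (card {is\<in>index_tuples (length \<alpha>). mono_of is \<alpha> = m}))"

definition qspan :: "series set \<Rightarrow> series set" where
  "qspan B = {f. \<exists>S c. finite S \<and> S \<subseteq> B \<and> f = (\<lambda>m. \<Sum>b\<in>S. c b * b m)}"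

definition LWCQSym :: "series set" where
  "LWCQSym = qspan {M \<alpha> | \<alpha>. left_weak_comp \<alpha>}"

definition GSym :: "series set" where
  "GSym = qspan {Mhat \<alpha> \<beta> | \<alpha> \<beta>. left_weak_comp \<alpha> \<and> length \<beta> = length \<alpha>}"

end

theory Submission
  imports Defs "HOL-Library.Function_Algebras"
begin

text \<open>
  Since M_alpha = hat M_(alpha, 0), only GSym \<subseteq> LWCQSym needs work; we induct on the sum of
  beta. For an index tuple 0 < i_0 < ... < i_(k-1), the positive integers up to i_j are
  i_0, ..., i_j together with the gaps (i_(p-1), i_p), p \<le> j (where i_(-1) = 0), so
  i_j = (j + 1) + \<Sum>_(p \<le> j) #(i_(p-1), i_p).
  A tuple with a chosen point n of its p-th gap is the same as the tuple with n inserted at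
  position p, i.e. an index tuple for alpha with an exponent 0 inserted at p, and the monomial
  is unchanged. Multiplying the weight i_0^beta_0 ... i_(k-1)^beta_(k-1) by i_j therefore gives
    hat M_(alpha, beta + e_j)
      = (j + 1) hat M_(alpha, beta) + \<Sum>_(p \<le> j) hat M_(alpha with 0 at p, beta with 0 at p),
  where every term on the right has a smaller exponent sum.
\<close>

interpretation series: module "\<lambda>(a::rat) (f::series) m. a * f m"
  by unfold_locales (auto simp: algebra_simps)

lemma sum_fun_apply: "(\<Sum>b\<in>S. f b) x = (\<Sum>b\<in>S. f b x)"
  by (induction S rule: infinite_finite_induct) auto

lemma qspan_eq_span: "qspan B = series.span B"
  unfolding qspan_def series.span_explicit by (auto simp: fun_eq_iff sum_fun_apply)

definition insert_at :: "nat \<Rightarrow> 'a \<Rightarrow> 'a list \<Rightarrow> 'a list" where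
  "insert_at p x xs = take p xs @ x # drop p xs"

definition remove_at :: "nat \<Rightarrow> 'a list \<Rightarrow> 'a list" where
  "remove_at p xs = take p xs @ drop (Suc p) xs"

lemma length_insert_at [simp]:
  "p \<le> length xs \<Longrightarrow> length (insert_at p x xs) = Suc (length xs)"
  by (simp add: insert_at_def)

lemma length_remove_at [simp]: "p < length xs \<Longrightarrow> length (remove_at p xs) = length xs - 1"
  by (simp add: remove_at_def)

lemma nth_insert_at:
  "p \<le> length xs \<Longrightarrow> i \<le> length xs \<Longrightarrow>
    insert_at p x xs ! i = (if i < p then xs ! i else if i = p then x else xs ! (i - 1))"
  by (auto simp: insert_at_def nth_append nth_Cons' min_def)

lemma nth_remove_at:
  "p < length xs \<Longrightarrow> i < length xs - 1 \<Longrightarrow>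
    remove_at p xs ! i = (if i < p then xs ! i else xs ! Suc i)"
  by (auto simp: remove_at_def nth_append min_def)

lemma insert_at_remove_at: "p < length xs \<Longrightarrow> insert_at p (xs ! p) (remove_at p xs) = xs"
  by (simp add: insert_at_def remove_at_def id_take_nth_drop[symmetric])

lemma remove_at_insert_at: "p \<le> length xs \<Longrightarrow> remove_at p (insert_at p x xs) = xs"
  by (simp add: insert_at_def remove_at_def)

lemma map_insert_at: "map f (insert_at p x xs) = insert_at p (f x) (map f xs)"
  by (simp add: insert_at_def take_map drop_map)

lemma zip_insert_at:
  "length xs = length ys \<Longrightarrow>
    zip (insert_at p x xs) (insert_at p y ys) = insert_at p (x, y) (zip xs ys)"
  by (simp add: insert_at_def take_zip drop_zip)

lemma sum_list_insert_at:
  "sum_list (insert_at p x xs) = x + sum_list (xs :: 'a::comm_monoid_add list)"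
  using sum_list_append[of "take p xs" "drop p xs"] by (simp add: insert_at_def add_ac)

lemma prod_list_insert_at:
  "prod_list (insert_at p x xs) = x * prod_list (xs :: 'a::comm_monoid_mult list)"
  using prod_list.append[of "take p xs" "drop p xs"] by (simp add: insert_at_def mult_ac)

lemma index_tuples_iff_nth:
  "is \<in> index_tuples k \<longleftrightarrow>
    length is = k \<and> (\<forall>i j. i < j \<longrightarrow> j < k \<longrightarrow> is ! i < is ! j) \<and> (\<forall>i<k. 0 < is ! i)"
  by (auto simp: index_tuples_def sorted_wrt_iff_nth_less in_set_conv_nth)

definition gap :: "nat list \<Rightarrow> nat \<Rightarrow> nat set" where
  "gap is p = {(if p = 0 then 0 else is ! (p - 1))<..<is ! p}"

lemma insert_at_gap_in_index_tuples:
  assumes "is \<in> index_tuples k" "p < k" "n \<in> gap is p"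
  shows "insert_at p n is \<in> index_tuples (Suc k)"
proof -
  have "length is = k" and mono: "\<And>i j. i < j \<Longrightarrow> j < k \<Longrightarrow> is ! i < is ! j"
    using assms(1) by (auto simp: index_tuples_iff_nth)
  have "is ! i < n" if "i < p" for i
  proof -
    have "i = p - 1 \<or> i < p - 1" using that by arith
    then have "is ! i \<le> is ! (p - 1)"
      using mono[of i "p - 1"] assms(2) by (auto intro: less_imp_le)
    then show ?thesis using assms(3) that by (simp add: gap_def)
  qed
  moreover have "n < is ! i" if "p \<le> i" "i < k" for i
    using mono[of p i] that assms(3) by (cases "i = p") (auto simp: gap_def)
  moreover have "0 < n" using assms(3) by (auto simp: gap_def)
  ultimately show ?thesis
    using assms mono \<open>length is = k\<close>
    by (auto simp: index_tuples_iff_nth nth_insert_at)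
qed

lemma remove_at_in_index_tuples:
  assumes "is \<in> index_tuples (Suc k)" "p < k"
  shows "remove_at p is \<in> index_tuples k" and "is ! p \<in> gap (remove_at p is) p"
  using assms by (auto simp: index_tuples_iff_nth nth_remove_at gap_def)

lemma nth_index_tuple_eq_sum_card_gap:
  assumes "is \<in> index_tuples k" "j < k"
  shows "is ! j = Suc j + (\<Sum>p\<le>j. card (gap is p))"
  using assms(2)
proof (induction j)
  case 0
  then show ?case using assms(1) by (auto simp: index_tuples_iff_nth gap_def)
next
  case (Suc j)
  have "is ! j < is ! Suc j" using assms(1) Suc.prems by (auto simp: index_tuples_iff_nth)
  then show ?case using Suc by (auto simp: gap_def)
qed

lemma last_ge_index_tuple:
  assumes "is \<in> index_tuples k" "n \<in> set is"
  shows "n \<le> last is"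
proof -
  obtain i where "i < k" "n = is ! i" using assms by (auto simp: index_tuples_iff_nth in_set_conv_nth)
  moreover have "last is = is ! (k - 1)"
    using assms by (cases "is = []") (auto simp: index_tuples_iff_nth last_conv_nth)
  ultimately show ?thesis using assms(1) by (cases "i = k - 1") (auto simp: index_tuples_iff_nth less_imp_le)
qed

lemma mono_of_zip:
  "length is = length \<alpha> \<Longrightarrow>
    mono_of is \<alpha> n = (\<Sum>(i, a)\<leftarrow>zip is \<alpha>. if i = n then a else 0)"
  by (simp add: mono_of_def sum_list_sum_nth atLeast0LessThan)

lemma mono_of_insert_at_zero:
  "length is = length \<alpha> \<Longrightarrow> p \<le> length is \<Longrightarrow>
    mono_of (insert_at p n is) (insert_at p 0 \<alpha>) = mono_of is \<alpha>"
  by (simp add: fun_eq_iff mono_of_zip zip_insert_at map_insert_at sum_list_insert_at)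

lemma mono_of_nth:
  assumes "is \<in> index_tuples (length \<alpha>)" "j < length \<alpha>"
  shows "mono_of is \<alpha> (is ! j) = \<alpha> ! j"
proof -
  have "distinct is" using assms(1) by (simp add: index_tuples_def strict_sorted_iff)
  then have "mono_of is \<alpha> (is ! j) = (\<Sum>l<length \<alpha>. if l = j then \<alpha> ! l else 0)"
    using assms unfolding mono_of_def by (intro sum.cong) (auto simp: index_tuples_def nth_eq_iff_index_eq)
  then show ?thesis using assms(2) by simp
qed

lemma mono_of_notin: "n \<notin> set is \<Longrightarrow> mono_of is \<alpha> n = 0"
  unfolding mono_of_def by (auto intro!: sum.neutral)

definition tuples_of :: "nat list \<Rightarrow> monomial \<Rightarrow> nat list set" where
  "tuples_of \<alpha> m = {is \<in> index_tuples (length \<alpha>). mono_of is \<alpha> = m}"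

lemma last_tuples_of:
  assumes "is \<in> tuples_of \<alpha> m" "left_weak_comp \<alpha>" "is \<noteq> []"
  shows "last is = (GREATEST n. 0 < m n)"
proof (rule Greatest_equality[symmetric])
  have tuple: "is \<in> index_tuples (length \<alpha>)" and m: "m = mono_of is \<alpha>"
    using assms(1) by (auto simp: tuples_of_def)
  then have "length \<alpha> \<noteq> 0" "length is = length \<alpha>"
    using assms(3) by (auto simp: index_tuples_def)
  then show "0 < m (last is)"
    using assms(2,3) mono_of_nth[OF tuple, of "length \<alpha> - 1"]
    by (simp add: m last_conv_nth left_weak_comp_def)
  show "n \<le> last is" if "0 < m n" for n
    using that last_ge_index_tuple[OF tuple] mono_of_notin[of n "is" \<alpha>] m by force
qed

lemma finite_tuples_of:
  assumes "left_weak_comp \<alpha>"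
  shows "finite (tuples_of \<alpha> m)"
proof (rule finite_subset)
  show "tuples_of \<alpha> m \<subseteq> {is. set is \<subseteq> {..GREATEST n. 0 < m n} \<and> length is = length \<alpha>}"
  proof
    fix "is" assume "is": "is \<in> tuples_of \<alpha> m"
    have "n \<le> (GREATEST n. 0 < m n)" if n: "n \<in> set is" for n
    proof -
      have "n \<le> last is" using "is" n by (auto simp: tuples_of_def intro: last_ge_index_tuple)
      also have "last is = (GREATEST n. 0 < m n)" using n by (intro last_tuples_of[OF "is" assms]) auto
      finally show ?thesis .
    qed
    then show "is \<in> {is. set is \<subseteq> {..GREATEST n. 0 < m n} \<and> length is = length \<alpha>}"
      using "is" by (auto simp: tuples_of_def index_tuples_def)
  qed
  show "finite {is. set is \<subseteq> {..GREATEST n. 0 < m n} \<and> length is = length \<alpha>}"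
    by (rule finite_lists_length_eq) simp
qed

definition tuple_weight :: "nat list \<Rightarrow> nat list \<Rightarrow> rat" where
  "tuple_weight \<beta> is = (\<Prod>j<length \<beta>. of_nat (is ! j) ^ (\<beta> ! j))"

lemma Mhat_eq_sum_tuple_weight:
  "length \<beta> = length \<alpha> \<Longrightarrow> Mhat \<alpha> \<beta> m = (\<Sum>is\<in>tuples_of \<alpha> m. tuple_weight \<beta> is)"
  by (simp add: Mhat_def tuples_of_def tuple_weight_def)

lemma Mhat_eq_M:
  "length \<beta> = length \<alpha> \<Longrightarrow> \<forall>j<length \<beta>. \<beta> ! j = 0 \<Longrightarrow> Mhat \<alpha> \<beta> = M \<alpha>"
  by (auto simp: Mhat_def M_def)

lemma tuple_weight_zip:
  "length is = length \<beta> \<Longrightarrow>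
    tuple_weight \<beta> is = (\<Prod>(i, b)\<leftarrow>zip is \<beta>. of_nat i ^ b)"
  by (simp add: tuple_weight_def prod.list_conv_set_nth atLeast0LessThan)

lemma tuple_weight_insert_at_zero:
  "length is = length \<beta> \<Longrightarrow> p \<le> length is \<Longrightarrow>
    tuple_weight (insert_at p 0 \<beta>) (insert_at p n is) = tuple_weight \<beta> is"
  by (simp add: tuple_weight_zip zip_insert_at map_insert_at prod_list_insert_at)

lemma tuple_weight_increment:
  assumes "j < length \<beta>"
  shows "tuple_weight (\<beta>[j := Suc (\<beta> ! j)]) is = of_nat (is ! j) * tuple_weight \<beta> is"
proof -
  have "tuple_weight (\<beta>[j := Suc (\<beta> ! j)]) is =
      (\<Prod>l<length \<beta>. (if l = j then of_nat (is ! j) else 1) * of_nat (is ! l) ^ (\<beta> ! l))"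
    unfolding tuple_weight_def by (intro prod.cong) (auto simp: nth_list_update)
  then show ?thesis using assms by (simp add: tuple_weight_def prod.distrib)
qed

lemma bij_betw_insert_at_gap:
  assumes "p < length \<alpha>"
  shows "bij_betw (\<lambda>(is, n). insert_at p n is)
    (SIGMA is:tuples_of \<alpha> m. gap is p) (tuples_of (insert_at p 0 \<alpha>) m)"
    (is "bij_betw ?ins ?A ?B")
proof -
  let ?rem = "\<lambda>is. (remove_at p is, is ! p)"
  have "?ins ` ?A \<subseteq> ?B"
  proof clarify
    fix "is" n assume "is \<in> tuples_of \<alpha> m" "n \<in> gap is p"
    then show "insert_at p n is \<in> tuples_of (insert_at p 0 \<alpha>) m"
      using assms insert_at_gap_in_index_tuples mono_of_insert_at_zero
      by (auto simp: tuples_of_def index_tuples_def)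
  qed
  moreover have "?rem ` ?B \<subseteq> ?A"
  proof clarify
    fix "is" assume "is \<in> tuples_of (insert_at p 0 \<alpha>) m"
    then have tuple: "is \<in> index_tuples (Suc (length \<alpha>))"
      and "mono_of is (insert_at p 0 \<alpha>) = m"
      using assms by (auto simp: tuples_of_def)
    moreover have "is = insert_at p (is ! p) (remove_at p is)"
      using tuple assms by (simp add: index_tuples_def insert_at_remove_at)
    ultimately have "mono_of (remove_at p is) \<alpha> = m"
      using assms mono_of_insert_at_zero[of "remove_at p is" \<alpha> p "is ! p"]
      by (simp add: index_tuples_def)
    then show "remove_at p is \<in> tuples_of \<alpha> m \<and> is ! p \<in> gap (remove_at p is) p"
      using remove_at_in_index_tuples[OF tuple assms] by (auto simp: tuples_of_def)
  qed
  moreover have "\<forall>x\<in>?A. ?rem (?ins x) = x"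
    using assms by (auto simp: tuples_of_def index_tuples_iff_nth remove_at_insert_at nth_insert_at)
  moreover have "\<forall>is\<in>?B. ?ins (?rem is) = is"
    using assms by (auto simp: tuples_of_def index_tuples_iff_nth insert_at_remove_at)
  ultimately show ?thesis
    by (intro bij_betw_byWitness[where f' = ?rem])
qed

lemma sum_tuple_weight_card_gap:
  assumes "left_weak_comp \<alpha>" "length \<beta> = length \<alpha>" "p < length \<alpha>"
  shows "(\<Sum>is\<in>tuples_of \<alpha> m. tuple_weight \<beta> is * of_nat (card (gap is p))) =
    Mhat (insert_at p 0 \<alpha>) (insert_at p 0 \<beta>) m"
proof -
  have "(\<Sum>is\<in>tuples_of \<alpha> m. tuple_weight \<beta> is * of_nat (card (gap is p))) =
      (\<Sum>is\<in>tuples_of \<alpha> m. \<Sum>n\<in>gap is p. tuple_weight \<beta> is)"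
    by (simp add: mult.commute)
  also have "\<dots> = (\<Sum>(is, n)\<in>(SIGMA is:tuples_of \<alpha> m. gap is p). tuple_weight \<beta> is)"
    by (rule sum.Sigma) (auto simp: finite_tuples_of[OF assms(1)] gap_def)
  also have "\<dots> = (\<Sum>(is, n)\<in>(SIGMA is:tuples_of \<alpha> m. gap is p).
      tuple_weight (insert_at p 0 \<beta>) (insert_at p n is))"
    using assms(2,3) tuple_weight_insert_at_zero
    by (intro sum.cong) (auto simp: tuples_of_def index_tuples_def)
  also have "\<dots> = (\<Sum>is\<in>tuples_of (insert_at p 0 \<alpha>) m. tuple_weight (insert_at p 0 \<beta>) is)"
    using sum.reindex_bij_betw[OF bij_betw_insert_at_gap[OF assms(3)]] by (simp add: case_prod_unfold)
  finally show ?thesis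
    using assms by (simp add: Mhat_eq_sum_tuple_weight)
qed

lemma Mhat_increment:
  assumes "left_weak_comp \<alpha>" "length \<beta> = length \<alpha>" "j < length \<alpha>"
  shows "Mhat \<alpha> (\<beta>[j := Suc (\<beta> ! j)]) m =
    of_nat (Suc j) * Mhat \<alpha> \<beta> m + (\<Sum>p\<le>j. Mhat (insert_at p 0 \<alpha>) (insert_at p 0 \<beta>) m)"
proof -
  have "Mhat \<alpha> (\<beta>[j := Suc (\<beta> ! j)]) m =
      (\<Sum>is\<in>tuples_of \<alpha> m. tuple_weight \<beta> is * of_nat (is ! j))"
    using assms by (simp add: Mhat_eq_sum_tuple_weight tuple_weight_increment mult.commute)
  also have "\<dots> = (\<Sum>is\<in>tuples_of \<alpha> m. of_nat (Suc j) * tuple_weight \<beta> is +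
      (\<Sum>p\<le>j. tuple_weight \<beta> is * of_nat (card (gap is p))))"
    using assms(3) nth_index_tuple_eq_sum_card_gap
    by (intro sum.cong) (auto simp: tuples_of_def algebra_simps sum_distrib_left)
  also have "\<dots> = of_nat (Suc j) * Mhat \<alpha> \<beta> m +
      (\<Sum>p\<le>j. \<Sum>is\<in>tuples_of \<alpha> m. tuple_weight \<beta> is * of_nat (card (gap is p)))"
    using assms(2)
    by (simp add: Mhat_eq_sum_tuple_weight sum.distrib sum_distrib_left sum.swap[of _ "tuples_of \<alpha> m"])
  finally show ?thesis
    using assms by (simp add: sum_tuple_weight_card_gap)
qed

lemma left_weak_comp_insert_at_zero:
  "left_weak_comp \<alpha> \<Longrightarrow> p < length \<alpha> \<Longrightarrow> left_weak_comp (insert_at p 0 \<alpha>)"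
  by (auto simp: left_weak_comp_def insert_at_def)

lemma Mhat_in_LWCQSym:
  assumes "left_weak_comp \<alpha>" "length \<beta> = length \<alpha>"
  shows "Mhat \<alpha> \<beta> \<in> LWCQSym"
  using assms
proof (induction "sum_list \<beta>" arbitrary: \<alpha> \<beta> rule: less_induct)
  case less
  show ?case
  proof (cases "\<forall>j<length \<beta>. \<beta> ! j = 0")
    case True
    then show ?thesis
      using less.prems by (auto simp: Mhat_eq_M LWCQSym_def qspan_eq_span intro: series.span_base)
  next
    case False
    then obtain j b where j: "j < length \<alpha>" "\<beta> ! j = Suc b"
      using less.prems(2) not0_implies_Suc by fastforce
    define \<beta>' where "\<beta>' = \<beta>[j := b]"
    have \<beta>: "\<beta> = \<beta>'[j := Suc (\<beta>' ! j)]"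
      using j less.prems(2) by (simp add: \<beta>'_def flip: j(2))
    have "length \<beta>' = length \<alpha>"
      using less.prems(2) by (simp add: \<beta>'_def)
    have smaller: "sum_list \<beta>' < sum_list \<beta>"
      using j less.prems(2) elem_le_sum_list[of j \<beta>] by (simp add: \<beta>'_def sum_list_update)
    have "Mhat \<alpha> \<beta>' \<in> LWCQSym"
      using less.hyps[OF smaller less.prems(1)] \<open>length \<beta>' = length \<alpha>\<close> .
    moreover have "Mhat (insert_at p 0 \<alpha>) (insert_at p 0 \<beta>') \<in> LWCQSym" if "p \<le> j" for p
      using less.hyps[of "insert_at p 0 \<beta>'" "insert_at p 0 \<alpha>"] smaller less.prems(1)
        \<open>length \<beta>' = length \<alpha>\<close> that j
      by (simp add: sum_list_insert_at left_weak_comp_insert_at_zero)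
    moreover have "Mhat \<alpha> \<beta> = (\<lambda>m. of_nat (Suc j) * Mhat \<alpha> \<beta>' m) +
        (\<Sum>p\<le>j. Mhat (insert_at p 0 \<alpha>) (insert_at p 0 \<beta>'))"
      using less.prems(1) \<open>length \<beta>' = length \<alpha>\<close> j
      by (subst \<beta>) (simp add: fun_eq_iff sum_fun_apply Mhat_increment)
    ultimately show ?thesis
      unfolding LWCQSym_def qspan_eq_span
      by (auto intro!: series.span_add series.span_scale series.span_sum)
  qed
qed

theorem proposition5p6:
  shows "GSym = LWCQSym"
proof
  have "series.subspace LWCQSym"
    unfolding LWCQSym_def qspan_eq_span by (rule series.subspace_span)
  then show "GSym \<subseteq> LWCQSym"
    unfolding GSym_def qspan_eq_span using Mhat_in_LWCQSym by (intro series.span_minimal) auto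
  have "{M \<alpha> |\<alpha>. left_weak_comp \<alpha>} \<subseteq>
      {Mhat \<alpha> \<beta> |\<alpha> \<beta>. left_weak_comp \<alpha> \<and> length \<beta> = length \<alpha>}"
  proof clarify
    fix \<alpha> :: "nat list" assume "left_weak_comp \<alpha>"
    moreover have "M \<alpha> = Mhat \<alpha> (replicate (length \<alpha>) 0)" by (simp add: Mhat_eq_M)
    ultimately show
      "\<exists>\<alpha>' \<beta>. M \<alpha> = Mhat \<alpha>' \<beta> \<and> left_weak_comp \<alpha>' \<and> length \<beta> = length \<alpha>'"
      by (metis length_replicate)
  qed
  then show "LWCQSym \<subseteq> GSym"
    unfolding GSym_def LWCQSym_def qspan_eq_span by (rule series.span_mono)
qed

end
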